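(* Let $R$ be a ring and let $I\subseteq J(R)$ be a two-sided ideal of $R$. Then $R$ is a CSNC ring if and only if $I$ is nil and $R/I$ is a CSNC ring.
   Context: All rings are associative with identity $1$. For a ring $R$, $\mathrm{Id}(R)$, $U(R)$, $\mathrm{Nil}(R)$ denote the sets of idempotents, units and nilpotent elements, and $J(R)$ the Jacobson radical. An element $a\in R$ is clean if $a=e+u$ for some $e\in\mathrm{Id}(R)$, $u\in U(R)$. An element $a$ is strongly nil-clean if $a=e+q$ with $e\in \mathrm{Id}(R)$, $q\in\mathrm{Nil}(R)$ and $eq=qe$. A ring $R$ is called CSNC if every clean element of $R$ is strongly nil-clean. An ideal is nil if all its elements are nilpotent. *)

theory Defs
  imports "HOL-Algebra.Algebra"
begin

definition left_ideal :: "'a set \<Rightarrow> ('a, 'b) ring_scheme \<Rightarrow> bool" where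
  "left_ideal I R \<longleftrightarrow> additive_subgroup I R \<and>
     (\<forall>a\<in>I. \<forall>x\<in>carrier R. x \<otimes>\<^bsub>R\<^esub> a \<in> I)"

definition maximal_left_ideal :: "'a set \<Rightarrow> ('a, 'b) ring_scheme \<Rightarrow> bool" where
  "maximal_left_ideal M R \<longleftrightarrow> left_ideal M R \<and> M \<noteq> carrier R \<and>
     (\<forall>N. left_ideal N R \<and> M \<subseteq> N \<longrightarrow> N = M \<or> N = carrier R)"

definition jacobson_radical :: "('a, 'b) ring_scheme \<Rightarrow> 'a set" where
  "jacobson_radical R = carrier R \<inter> \<Inter> {M. maximal_left_ideal M R}"

definition ring_idempotent :: "('a, 'b) ring_scheme \<Rightarrow> 'a \<Rightarrow> bool" where
  "ring_idempotent R e \<longleftrightarrow> e \<in> carrier R \<and> e \<otimes>\<^bsub>R\<^esub> e = e"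

definition ring_nilpotent :: "('a, 'b) ring_scheme \<Rightarrow> 'a \<Rightarrow> bool" where
  "ring_nilpotent R q \<longleftrightarrow> q \<in> carrier R \<and> (\<exists>n::nat. q [^]\<^bsub>R\<^esub> n = \<zero>\<^bsub>R\<^esub>)"

definition clean_elem :: "('a, 'b) ring_scheme \<Rightarrow> 'a \<Rightarrow> bool" where
  "clean_elem R a \<longleftrightarrow> (\<exists>e u. ring_idempotent R e \<and> u \<in> Units R \<and> a = e \<oplus>\<^bsub>R\<^esub> u)"

definition strongly_nil_clean_elem :: "('a, 'b) ring_scheme \<Rightarrow> 'a \<Rightarrow> bool" where
  "strongly_nil_clean_elem R a \<longleftrightarrow> (\<exists>e q. ring_idempotent R e \<and> ring_nilpotent R q \<and>
      e \<otimes>\<^bsub>R\<^esub> q = q \<otimes>\<^bsub>R\<^esub> e \<and> a = e \<oplus>\<^bsub>R\<^esub> q)"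

definition CSNC :: "('a, 'b) ring_scheme \<Rightarrow> bool" where
  "CSNC R \<longleftrightarrow> (\<forall>a\<in>carrier R. clean_elem R a \<longrightarrow> strongly_nil_clean_elem R a)"

definition nil_ideal :: "'a set \<Rightarrow> ('a, 'b) ring_scheme \<Rightarrow> bool" where
  "nil_ideal I R \<longleftrightarrow> (\<forall>x\<in>I. ring_nilpotent R x)"

end

theory Submission
  imports Defs
begin

text \<open>An element \<open>a\<close> is strongly nil-clean iff \<open>a\<^sup>2 - a\<close> is nilpotent: if \<open>a = e + q\<close> then
  \<open>a\<^sup>2 - a = q(2e + q - 1)\<close> with commuting factors, and conversely an idempotent is lifted modulo
  the nilpotent \<open>a\<^sup>2 - a\<close> by Newton iteration inside the bicommutant of \<open>a\<close>, a commutative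
  subring. For \<open>I \<subseteq> J(R)\<close> every \<open>1 + x\<close> with \<open>x \<in> I\<close> is a unit, hence clean; if \<open>R\<close> is CSNC
  then \<open>(1 + x)\<^sup>2 - (1 + x) = (1 + x)x\<close> is nilpotent, and so is \<open>x\<close>. Once \<open>I\<close> is nil,
  idempotents lift modulo \<open>I\<close> and units lift because \<open>I \<subseteq> J(R)\<close>, so clean elements of \<open>R/I\<close> come
  from clean elements of \<open>R\<close>; and nilpotence of \<open>a\<^sup>2 - a\<close> passes from \<open>R/I\<close> back to \<open>R\<close>.\<close>

definition bicommutant :: "('a, 'b) ring_scheme \<Rightarrow> 'a set \<Rightarrow> 'a set" where
  "bicommutant R S = {x \<in> carrier R. \<forall>y\<in>carrier R.
     (\<forall>s\<in>S. y \<otimes>\<^bsub>R\<^esub> s = s \<otimes>\<^bsub>R\<^esub> y) \<longrightarrow> x \<otimes>\<^bsub>R\<^esub> y = y \<otimes>\<^bsub>R\<^esub> x}"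

lemma (in ring) bicommutant_subring: "subring (bicommutant R S) R"
proof (rule subringI)
  show "bicommutant R S \<subseteq> carrier R" "\<one> \<in> bicommutant R S"
    by (auto simp: bicommutant_def)
next
  fix h assume "h \<in> bicommutant R S"
  then show "\<ominus> h \<in> bicommutant R S" by (auto simp: bicommutant_def l_minus r_minus)
next
  fix h1 h2 assume h1: "h1 \<in> bicommutant R S" and h2: "h2 \<in> bicommutant R S"
  then show "h1 \<oplus> h2 \<in> bicommutant R S"
    by (auto simp: bicommutant_def l_distr r_distr)
  show "h1 \<otimes> h2 \<in> bicommutant R S" unfolding bicommutant_def
  proof (intro CollectI conjI ballI impI)
    show "h1 \<otimes> h2 \<in> carrier R" using h1 h2 by (simp add: bicommutant_def)
    fix y assume y: "y \<in> carrier R" "\<forall>s\<in>S. y \<otimes> s = s \<otimes> y"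
    then have "h1 \<otimes> y = y \<otimes> h1" "h2 \<otimes> y = y \<otimes> h2" and c: "h1 \<in> carrier R" "h2 \<in> carrier R"
      using h1 h2 by (auto simp: bicommutant_def)
    then show "h1 \<otimes> h2 \<otimes> y = y \<otimes> (h1 \<otimes> h2)" using y(1) by (metis m_assoc)
  qed
qed

lemma (in ring) subset_bicommutant: "S \<subseteq> carrier R \<Longrightarrow> S \<subseteq> bicommutant R S"
  unfolding bicommutant_def by auto

text \<open>If the elements of \<open>S\<close> commute with each other, then each element of the bicommutant lies
  in the commutant of \<open>S\<close>, so the bicommutant is commutative.\<close>

lemma (in ring) bicommutant_commute:
  assumes "S \<subseteq> carrier R" "\<And>s t. s \<in> S \<Longrightarrow> t \<in> S \<Longrightarrow> s \<otimes> t = t \<otimes> s"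
    and "x \<in> bicommutant R S" "z \<in> bicommutant R S"
  shows "x \<otimes> z = z \<otimes> x"
proof -
  have "z \<otimes> s = s \<otimes> z" if "s \<in> S" for s
    using assms(1,2,4) that unfolding bicommutant_def by blast
  then show ?thesis using assms(3,4) unfolding bicommutant_def by blast
qed

lemma (in ring) bicommutant_cring:
  assumes "S \<subseteq> carrier R" "\<And>s t. s \<in> S \<Longrightarrow> t \<in> S \<Longrightarrow> s \<otimes> t = t \<otimes> s"
  shows "cring (R\<lparr>carrier := bicommutant R S\<rparr>)"
proof -
  have "subcring (bicommutant R S) R"
    using subcringI[OF bicommutant_subring] bicommutant_commute[OF assms] by blast
  then show ?thesis using subcring_iff subringE(1)[OF bicommutant_subring] by blast
qed

lemma (in ring) nilpotent_mult_commute: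
  assumes "ring_nilpotent R a" "b \<in> carrier R" "a \<otimes> b = b \<otimes> a"
  shows "ring_nilpotent R (a \<otimes> b)"
proof -
  obtain N where a: "a \<in> carrier R" "a [^] (N::nat) = \<zero>"
    using assms(1) unfolding ring_nilpotent_def by blast
  have "(a \<otimes> b) [^] N = a [^] N \<otimes> b [^] N" using pow_mult_distrib assms(2,3) a(1) by blast
  then show ?thesis using a assms(2) unfolding ring_nilpotent_def by auto
qed

lemma (in ring) nat_pow_zero_mono:
  assumes "a \<in> carrier R" "a [^] (m::nat) = \<zero>" "m \<le> k"
  shows "a [^] k = \<zero>"
proof -
  have "a [^] k = a [^] m \<otimes> a [^] (k - m)"
    using assms(1,3) nat_pow_mult[of a m "k - m"] by simp
  then show ?thesis using assms(1,2) by simp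
qed

lemma (in ring) minus_eq_iff_eq_add:
  assumes "a \<in> carrier R" "b \<in> carrier R" "c \<in> carrier R"
  shows "a \<ominus> b = c \<longleftrightarrow> a = b \<oplus> c"
  using assms by (metis a_minus_def add.inv_solve_right add.m_comm)

lemma (in cring) newton_step_idempotent:
  assumes x: "x \<in> carrier R" and n: "n \<in> carrier R" and xn: "x \<otimes> x = x \<oplus> n"
  defines "y \<equiv> x \<oplus> n \<otimes> (\<one> \<ominus> x \<ominus> x)"
  shows "y \<otimes> y = y \<oplus> n \<otimes> n \<otimes> (n \<oplus> n \<oplus> n \<oplus> n \<ominus> (\<one> \<oplus> \<one> \<oplus> \<one>))"
proof -
  define t where "t = \<one> \<ominus> x \<ominus> x"
  have t: "t \<in> carrier R" using x by (simp add: t_def)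
  have defect: "x \<otimes> x \<ominus> x = n" using minus_eq_iff_eq_add x n xn by simp
  have "y \<otimes> y \<ominus> y = (x \<otimes> x \<ominus> x) \<oplus> n \<otimes> (t \<otimes> t) \<otimes> (n \<ominus> \<one>) \<oplus> n \<otimes> t \<otimes> (x \<oplus> x \<ominus> \<one> \<oplus> t)"
    unfolding y_def t_def[symmetric] using x n t by algebra
  moreover have "t \<otimes> t = \<one> \<oplus> (n \<oplus> n \<oplus> n \<oplus> n)"
    unfolding t_def defect[symmetric] using x by algebra
  moreover have "x \<oplus> x \<ominus> \<one> \<oplus> t = \<zero>" unfolding t_def using x by algebra
  ultimately have "y \<otimes> y \<ominus> y = n \<oplus> n \<otimes> (\<one> \<oplus> (n \<oplus> n \<oplus> n \<oplus> n)) \<otimes> (n \<ominus> \<one>)"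
    using defect n t by simp
  also have "\<dots> = n \<otimes> n \<otimes> (n \<oplus> n \<oplus> n \<oplus> n \<ominus> (\<one> \<oplus> \<one> \<oplus> \<one>))"
    using n by algebra
  finally show ?thesis using minus_eq_iff_eq_add x n t unfolding y_def by simp
qed

text \<open>In a commutative ring an element \<open>x\<close> with \<open>x\<^sup>2 - x\<close> nilpotent is congruent to an
  idempotent modulo \<open>x\<^sup>2 - x\<close>: the Newton iteration \<open>x \<mapsto> 3x\<^sup>2 - 2x\<^sup>3\<close> squares the nilpotent
  defect at each step.\<close>

lemma (in cring) idempotent_lifting_pow2:
  "\<lbrakk> x \<in> carrier R; n \<in> carrier R; x \<otimes> x = x \<oplus> n; n [^] ((2::nat) ^ k) = \<zero> \<rbrakk>
     \<Longrightarrow> \<exists>f\<in>carrier R. \<exists>c\<in>carrier R. f \<otimes> f = f \<and> x = f \<oplus> n \<otimes> c"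
proof (induction k arbitrary: x n)
  case 0
  then show ?case by (intro bexI[of _ x] bexI[of _ \<zero>]) auto
next
  case (Suc k)
  define t where "t = \<one> \<ominus> x \<ominus> x"
  define w where "w = n \<oplus> n \<oplus> n \<oplus> n \<ominus> (\<one> \<oplus> \<one> \<oplus> \<one>)"
  define y where "y = x \<oplus> n \<otimes> t"
  have carr: "t \<in> carrier R" "w \<in> carrier R" "y \<in> carrier R"
    using Suc.prems(1,2) by (auto simp: t_def w_def y_def)
  have y_idem: "y \<otimes> y = y \<oplus> n \<otimes> n \<otimes> w"
    using newton_step_idempotent[OF Suc.prems(1-3)] by (simp add: y_def t_def w_def)
  define K where "K = (2::nat) ^ k"
  have "(n \<otimes> n \<otimes> w) [^] K = (n [^] K \<otimes> n [^] K) \<otimes> w [^] K"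
    using Suc.prems(2) carr by (simp add: nat_pow_distrib)
  also have "n [^] K \<otimes> n [^] K = \<zero>"
    using Suc.prems(2,4) by (simp add: K_def nat_pow_mult mult_2)
  finally have "(n \<otimes> n \<otimes> w) [^] K = \<zero>" using carr by simp
  then obtain f c where f: "f \<in> carrier R" "c \<in> carrier R" "f \<otimes> f = f"
    and y_eq: "y = f \<oplus> n \<otimes> n \<otimes> w \<otimes> c"
    using Suc.IH[OF carr(3) _ y_idem] Suc.prems(2) carr by (auto simp: K_def m_assoc)
  have "x = y \<ominus> n \<otimes> t" unfolding y_def using Suc.prems(1,2) carr by algebra
  also have "\<dots> = f \<oplus> n \<otimes> (n \<otimes> w \<otimes> c \<ominus> t)"
    unfolding y_eq using f Suc.prems(2) carr by algebra
  finally show ?case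
    using f Suc.prems(2) carr by (intro bexI[of _ f] bexI[of _ "n \<otimes> w \<otimes> c \<ominus> t"]) auto
qed

lemma (in cring) idempotent_lifting:
  assumes "x \<in> carrier R" "n \<in> carrier R" "x \<otimes> x = x \<oplus> n" "n [^] (N::nat) = \<zero>"
  obtains f c where "f \<in> carrier R" "c \<in> carrier R" "f \<otimes> f = f" "x = f \<oplus> n \<otimes> c"
proof -
  have "n [^] ((2::nat) ^ N) = \<zero>"
    using nat_pow_zero_mono[OF assms(2,4)] by (simp add: less_imp_le)
  then show ?thesis using idempotent_lifting_pow2[OF assms(1-3)] that by blast
qed

lemma (in ring) idempotent_plus_commuting_defect:
  assumes "e \<in> carrier R" "q \<in> carrier R" "e \<otimes> e = e" "e \<otimes> q = q \<otimes> e"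
  shows "(e \<oplus> q) \<otimes> (e \<oplus> q) \<ominus> (e \<oplus> q) = q \<otimes> (e \<oplus> e \<oplus> q \<ominus> \<one>)"
  using assms by (simp add: l_distr r_distr a_minus_def r_minus minus_add a_ac r_neg2)

lemma (in ring) commuting_idempotent_lifting:
  assumes x: "x \<in> carrier R" and nil: "ring_nilpotent R (x \<otimes> x \<ominus> x)"
  obtains f q c where "ring_idempotent R f" "ring_nilpotent R q" "f \<otimes> q = q \<otimes> f"
    "x = f \<oplus> q" "c \<in> carrier R" "q = (x \<otimes> x \<ominus> x) \<otimes> c"
proof -
  let ?C = "bicommutant R {x}"
  define n where "n = x \<otimes> x \<ominus> x"
  interpret Q: cring "R\<lparr>carrier := ?C\<rparr>" by (rule bicommutant_cring) (use x in auto)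
  have sub: "subring ?C R" by (rule bicommutant_subring)
  have xC: "x \<in> ?C" using subset_bicommutant[of "{x}"] x by simp
  then have nC: "n \<in> ?C" unfolding n_def a_minus_def using subringE(5-7)[OF sub] by blast
  have "x \<otimes> x = x \<oplus> n"
    unfolding n_def using x minus_eq_iff_eq_add[of "x \<otimes> x" x "x \<otimes> x \<ominus> x"] by simp
  moreover obtain N where "n [^] (N::nat) = \<zero>" using nil unfolding n_def ring_nilpotent_def by blast
  ultimately obtain f c where fc: "f \<in> ?C" "c \<in> ?C" "f \<otimes> f = f" "x = f \<oplus> n \<otimes> c"
    using Q.idempotent_lifting[of x n N] xC nC by (auto simp: nat_pow_consistent[symmetric])
  have ncC: "n \<otimes> c \<in> ?C" using nC fc(2) subringE(6)[OF sub] by blast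
  have carr: "f \<in> carrier R" "c \<in> carrier R" "n \<in> carrier R"
    using fc(1,2) nC subringE(1)[OF sub] by auto
  have "ring_nilpotent R (n \<otimes> c)"
    using nilpotent_mult_commute[of n c] nil carr fc(2) nC Q.m_comm unfolding n_def by simp
  moreover have "f \<otimes> (n \<otimes> c) = (n \<otimes> c) \<otimes> f" using Q.m_comm fc(1) ncC by simp
  ultimately show ?thesis using that fc carr unfolding n_def ring_idempotent_def by blast
qed

lemma (in ring) strongly_nil_clean_iff:
  assumes a: "a \<in> carrier R"
  shows "strongly_nil_clean_elem R a \<longleftrightarrow> ring_nilpotent R (a \<otimes> a \<ominus> a)"
proof
  assume "strongly_nil_clean_elem R a"
  then obtain e q where e: "e \<in> carrier R" "e \<otimes> e = e" and q: "ring_nilpotent R q"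
    and eq: "e \<otimes> q = q \<otimes> e" and a_eq: "a = e \<oplus> q"
    unfolding strongly_nil_clean_elem_def ring_idempotent_def by blast
  have qc: "q \<in> carrier R" using q unfolding ring_nilpotent_def by blast
  have "a \<otimes> a \<ominus> a = q \<otimes> (e \<oplus> e \<oplus> q \<ominus> \<one>)"
    unfolding a_eq using idempotent_plus_commuting_defect[OF e(1) qc e(2) eq] .
  moreover have "q \<otimes> (e \<oplus> e \<oplus> q \<ominus> \<one>) = (e \<oplus> e \<oplus> q \<ominus> \<one>) \<otimes> q"
    using e qc eq by (simp add: l_distr r_distr a_minus_def r_minus l_minus)
  ultimately show "ring_nilpotent R (a \<otimes> a \<ominus> a)"
    using nilpotent_mult_commute[OF q] e(1) qc by simp
next
  assume "ring_nilpotent R (a \<otimes> a \<ominus> a)"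
  then show "strongly_nil_clean_elem R a"
    using commuting_idempotent_lifting[OF a] unfolding strongly_nil_clean_elem_def by metis
qed

lemma (in ring_hom_ring) hom_idempotent: "ring_idempotent R e \<Longrightarrow> ring_idempotent S (h e)"
  unfolding ring_idempotent_def using hom_mult[of e e] by simp

lemma (in ring_hom_ring) hom_nilpotent: "ring_nilpotent R q \<Longrightarrow> ring_nilpotent S (h q)"
  unfolding ring_nilpotent_def using hom_nat_pow by (metis hom_closed hom_zero)

lemma (in ring_hom_ring) hom_a_minus:
  "a \<in> carrier R \<Longrightarrow> b \<in> carrier R \<Longrightarrow> h (a \<ominus> b) = h a \<ominus>\<^bsub>S\<^esub> h b"
  by (simp add: R.minus_eq S.minus_eq)

lemma (in ring_hom_ring) hom_Units:
  assumes "u \<in> Units R"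
  shows "h u \<in> Units S"
proof -
  obtain v where "u \<in> carrier R" "v \<in> carrier R" "v \<otimes> u = \<one>" "u \<otimes> v = \<one>"
    using assms unfolding Units_def by blast
  then show ?thesis
    unfolding Units_def using hom_mult[of v u] hom_mult[of u v] by (auto intro!: bexI[of _ "h v"])
qed

lemma (in ring_hom_ring) hom_clean: "clean_elem R a \<Longrightarrow> clean_elem S (h a)"
  unfolding clean_elem_def ring_idempotent_def
  by (metis (no_types, lifting) R.Units_closed hom_add hom_idempotent hom_Units ring_idempotent_def)

lemma (in ring_hom_ring) hom_strongly_nil_clean:
  "strongly_nil_clean_elem R a \<Longrightarrow> strongly_nil_clean_elem S (h a)"
  unfolding strongly_nil_clean_elem_def
  by (metis hom_add hom_mult hom_idempotent hom_nilpotent ring_idempotent_def ring_nilpotent_def)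

lemma (in ring) left_idealI:
  assumes "L \<subseteq> carrier R" "L \<noteq> {}"
    and "\<And>a b. a \<in> L \<Longrightarrow> b \<in> L \<Longrightarrow> a \<oplus> b \<in> L"
    and "\<And>a x. a \<in> L \<Longrightarrow> x \<in> carrier R \<Longrightarrow> x \<otimes> a \<in> L"
  shows "left_ideal L R"
proof -
  have "\<ominus> a \<in> L" if "a \<in> L" for a
    using assms(4)[of a "\<ominus> \<one>"] assms(1) that by (auto simp: l_minus)
  then have "subgroup L (add_monoid R)"
    using assms(1-3) by (intro add.subgroupI) auto
  then show ?thesis using assms(4) unfolding left_ideal_def by (blast intro: additive_subgroupI)
qed

lemma (in ring) left_ideal_eq_carrier:
  assumes "left_ideal L R" "\<one> \<in> L"
  shows "L = carrier R"
proof
  show "L \<subseteq> carrier R"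
    using assms(1) additive_subgroup.a_subset unfolding left_ideal_def by blast
  show "carrier R \<subseteq> L"
    using assms unfolding left_ideal_def by (metis r_one subsetI)
qed

lemma (in ring) left_ideal_principal:
  assumes u: "u \<in> carrier R"
  shows "left_ideal {y \<otimes> u | y. y \<in> carrier R} R"
proof (rule left_idealI)
  fix a b assume "a \<in> {y \<otimes> u | y. y \<in> carrier R}" "b \<in> {y \<otimes> u | y. y \<in> carrier R}"
  then obtain y z where "y \<in> carrier R" "z \<in> carrier R" "a = y \<otimes> u" "b = z \<otimes> u" by blast
  then show "a \<oplus> b \<in> {y \<otimes> u | y. y \<in> carrier R}"
    using u by (auto simp: l_distr[symmetric] intro!: exI[of _ "y \<oplus> z"])
next
  fix a x assume "a \<in> {y \<otimes> u | y. y \<in> carrier R}" "x \<in> carrier R"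
  then obtain y where "y \<in> carrier R" "a = y \<otimes> u" by blast
  then show "x \<otimes> a \<in> {y \<otimes> u | y. y \<in> carrier R}"
    using u \<open>x \<in> carrier R\<close> by (auto simp: m_assoc[symmetric] intro!: exI[of _ "x \<otimes> y"])
qed (use u in auto)

lemma (in ring) left_ideal_chain_Union:
  assumes "C \<noteq> {}" "\<And>N. N \<in> C \<Longrightarrow> left_ideal N R"
    and "\<And>M N. M \<in> C \<Longrightarrow> N \<in> C \<Longrightarrow> M \<subseteq> N \<or> N \<subseteq> M"
  shows "left_ideal (\<Union>C) R"
proof (rule left_idealI)
  have sub: "additive_subgroup N R" if "N \<in> C" for N
    using assms(2)[OF that] unfolding left_ideal_def by blast
  then show "\<Union>C \<subseteq> carrier R" using additive_subgroup.a_subset by blast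
  obtain N where "N \<in> C" using assms(1) by blast
  then show "\<Union>C \<noteq> {}" using additive_subgroup.zero_closed[OF sub] by blast
  show "a \<oplus> b \<in> \<Union>C" if a: "a \<in> \<Union>C" and b: "b \<in> \<Union>C" for a b
  proof -
    obtain M N where MN: "M \<in> C" "N \<in> C" and "a \<in> M" "b \<in> N" using a b by blast
    moreover have "M \<subseteq> N \<or> N \<subseteq> M" using assms(3)[OF MN] .
    ultimately have "a \<oplus> b \<in> M \<or> a \<oplus> b \<in> N"
      using additive_subgroup.a_closed[OF sub[OF MN(1)]] additive_subgroup.a_closed[OF sub[OF MN(2)]]
      by blast
    then show ?thesis using MN by blast
  qed
  show "x \<otimes> a \<in> \<Union>C" if a: "a \<in> \<Union>C" and x: "x \<in> carrier R" for a x
  proof -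
    obtain N where N: "N \<in> C" "a \<in> N" using a by blast
    then have "x \<otimes> a \<in> N" using assms(2)[OF N(1)] x unfolding left_ideal_def by blast
    then show ?thesis using N(1) by blast
  qed
qed

lemma (in ring) exists_maximal_left_ideal:
  assumes "left_ideal L R" "\<one> \<notin> L"
  obtains M where "maximal_left_ideal M R" "L \<subseteq> M"
proof -
  define \<A> where "\<A> = {N. left_ideal N R \<and> L \<subseteq> N \<and> \<one> \<notin> N}"
  have "\<exists>M\<in>\<A>. \<forall>N\<in>\<A>. M \<subseteq> N \<longrightarrow> N = M"
  proof (rule subset_Zorn_nonempty)
    show "\<A> \<noteq> {}" using assms unfolding \<A>_def by blast
    fix C assume "C \<noteq> {}" "subset.chain \<A> C"
    then show "\<Union>C \<in> \<A>"
      using left_ideal_chain_Union[of C] unfolding \<A>_def subset.chain_def by auto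
  qed
  then obtain M where M: "M \<in> \<A>" "\<And>N. N \<in> \<A> \<Longrightarrow> M \<subseteq> N \<Longrightarrow> N = M" by blast
  have "maximal_left_ideal M R"
    unfolding maximal_left_ideal_def
  proof (intro conjI allI impI)
    show "left_ideal M R" "M \<noteq> carrier R" using M(1) by (auto simp: \<A>_def)
    fix N assume N: "left_ideal N R \<and> M \<subseteq> N"
    show "N = M \<or> N = carrier R"
    proof (cases "\<one> \<in> N")
      case True
      then show ?thesis using N left_ideal_eq_carrier by blast
    next
      case False
      then have "N \<in> \<A>" using N M(1) by (auto simp: \<A>_def)
      then show ?thesis using M(2) N by blast
    qed
  qed
  then show ?thesis using that M(1) unfolding \<A>_def by blast
qed

lemma (in ring) jacobson_radical_left_invertible:
  assumes x: "x \<in> jacobson_radical R"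
  shows "\<exists>y\<in>carrier R. y \<otimes> (\<one> \<oplus> x) = \<one>"
proof (rule ccontr)
  assume no_inverse: "\<not> ?thesis"
  have xc: "x \<in> carrier R" using x unfolding jacobson_radical_def by blast
  let ?L = "{y \<otimes> (\<one> \<oplus> x) | y. y \<in> carrier R}"
  have "\<one> \<notin> ?L" using no_inverse by auto
  then obtain M where M: "maximal_left_ideal M R" "?L \<subseteq> M"
    using exists_maximal_left_ideal left_ideal_principal xc by blast
  have M_sub: "additive_subgroup M R" and "left_ideal M R"
    using M(1) unfolding maximal_left_ideal_def left_ideal_def by blast+
  have "\<one> \<otimes> (\<one> \<oplus> x) \<in> ?L" using xc by blast
  then have "\<one> \<oplus> x \<in> M" using M(2) xc by auto
  moreover have "x \<in> M" using x M(1) unfolding jacobson_radical_def by blast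
  ultimately have "(\<one> \<oplus> x) \<oplus> \<ominus> x \<in> M"
    using additive_subgroup.a_closed[OF M_sub] additive_subgroup.a_inv_closed[OF M_sub] by blast
  then have "\<one> \<in> M" using xc by (simp add: add.m_assoc r_neg)
  then have "M = carrier R" using \<open>left_ideal M R\<close> left_ideal_eq_carrier by blast
  then show False using M(1) unfolding maximal_left_ideal_def by blast
qed

lemma (in monoid) Units_if_left_right_inverse:
  assumes "a \<in> carrier G" "p \<in> carrier G" "r \<in> carrier G" "p \<otimes> a = \<one>" "a \<otimes> r = \<one>"
  shows "a \<in> Units G"
proof -
  have "p = r" using inv_unique[OF assms(4,5,1,2,3)] .
  then show ?thesis unfolding Units_def using assms by auto
qed

lemma (in ring) one_plus_jacobson_Units:
  assumes I: "ideal I R" "I \<subseteq> jacobson_radical R" and x: "x \<in> I"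
  shows "\<one> \<oplus> x \<in> Units R"
proof -
  have xc: "x \<in> carrier R" using x ideal.Icarr[OF I(1)] by blast
  obtain y where y: "y \<in> carrier R" "y \<otimes> (\<one> \<oplus> x) = \<one>"
    using jacobson_radical_left_invertible x I(2) by blast
  txt \<open>The left inverse \<open>y = 1 - yx\<close> again lies in \<open>1 + I\<close>, so it has a left inverse \<open>z\<close> as well;
    then \<open>z = 1 + x\<close>.\<close>
  have "\<ominus> y \<otimes> x \<in> I" using ideal.I_l_closed[OF I(1) x] y(1) by simp
  then obtain z where z: "z \<in> carrier R" "z \<otimes> (\<one> \<oplus> \<ominus> y \<otimes> x) = \<one>"
    using jacobson_radical_left_invertible I(2) by blast
  have "y \<oplus> y \<otimes> x = \<one>" using y xc by (simp add: r_distr)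
  then have "y = \<one> \<oplus> \<ominus> y \<otimes> x"
    using add.inv_solve_right[of y \<one> "y \<otimes> x"] y(1) xc by (simp add: l_minus)
  then have "z = \<one> \<oplus> x" using inv_unique[of z y "\<one> \<oplus> x"] y z xc by simp
  then show ?thesis
    using Units_if_left_right_inverse[of "\<one> \<oplus> x" y y] y z xc \<open>y = \<one> \<oplus> \<ominus> y \<otimes> x\<close> by simp
qed

lemma (in ring) Units_plus_jacobson:
  assumes I: "ideal I R" "I \<subseteq> jacobson_radical R" and u: "u \<in> Units R" and x: "x \<in> I"
  shows "u \<oplus> x \<in> Units R"
proof -
  have xc: "x \<in> carrier R" using x ideal.Icarr[OF I(1)] by blast
  have uc: "u \<in> carrier R" "inv u \<in> carrier R" using u by auto
  have "u \<oplus> x = u \<otimes> (\<one> \<oplus> inv u \<otimes> x)"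
    using u uc xc by (simp add: r_distr m_assoc[symmetric])
  moreover have "\<one> \<oplus> inv u \<otimes> x \<in> Units R"
    using one_plus_jacobson_Units[OF I ideal.I_l_closed[OF I(1) x uc(2)]] .
  ultimately show ?thesis using u by simp
qed

lemma (in ideal) FactRing_carrier_rcos:
  assumes "C \<in> carrier (R Quot I)"
  obtains a where "a \<in> carrier R" "C = I +> a"
  using assms unfolding FactRing_def A_RCOSETS_def' by auto

lemma (in ideal) rcos_eq_iff:
  "a \<in> carrier R \<Longrightarrow> b \<in> carrier R \<Longrightarrow> I +> a = I +> b \<longleftrightarrow> a \<ominus> b \<in> I"
  using quotient_eq_iff_same_a_r_cos[OF is_ideal] by blast

lemma (in ideal) rcos_eq_zero_iff: "a \<in> carrier R \<Longrightarrow> I +> a = \<zero>\<^bsub>R Quot I\<^esub> \<longleftrightarrow> a \<in> I"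
  unfolding FactRing_def using rcos_const_imp_mem a_rcos_zero[OF is_ideal] by auto

lemma (in ideal) nilpotent_lift:
  assumes nil: "nil_ideal I R" and x: "x \<in> carrier R" and "ring_nilpotent (R Quot I) (I +> x)"
  shows "ring_nilpotent R x"
proof -
  interpret h: ring_hom_ring R "R Quot I" "(+>) I" by (rule rcos_ring_hom_ring)
  obtain N where N: "(I +> x) [^]\<^bsub>R Quot I\<^esub> (N::nat) = \<zero>\<^bsub>R Quot I\<^esub>"
    using assms(3) unfolding ring_nilpotent_def by blast
  have "I +> (x [^] N) = (I +> x) [^]\<^bsub>R Quot I\<^esub> N" by (rule h.hom_nat_pow[OF x])
  then have "x [^] N \<in> I" using rcos_eq_zero_iff[of "x [^] N"] N x by simp
  then obtain K where "(x [^] N) [^] (K::nat) = \<zero>"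
    using nil unfolding nil_ideal_def ring_nilpotent_def by blast
  then have "x [^] (N * K) = \<zero>" using x by (simp add: nat_pow_pow)
  then show ?thesis using x unfolding ring_nilpotent_def by blast
qed

lemma (in ideal) idempotent_lift:
  assumes nil: "nil_ideal I R" and e: "e \<in> carrier R"
    and "ring_idempotent (R Quot I) (I +> e)"
  obtains f q where "ring_idempotent R f" "q \<in> I" "e = f \<oplus> q"
proof -
  interpret h: ring_hom_ring R "R Quot I" "(+>) I" by (rule rcos_ring_hom_ring)
  have "I +> (e \<otimes> e) = (I +> e) \<otimes>\<^bsub>R Quot I\<^esub> (I +> e)" by (rule h.hom_mult[OF e e])
  also have "\<dots> = I +> e" using assms(3) unfolding ring_idempotent_def by blast
  finally have defect: "e \<otimes> e \<ominus> e \<in> I" using rcos_eq_iff[of "e \<otimes> e" e] e by simp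
  then have "ring_nilpotent R (e \<otimes> e \<ominus> e)" using nil unfolding nil_ideal_def by blast
  then obtain f q c where "ring_idempotent R f" "ring_nilpotent R q" "f \<otimes> q = q \<otimes> f"
    "e = f \<oplus> q" "c \<in> carrier R" "q = (e \<otimes> e \<ominus> e) \<otimes> c"
    using commuting_idempotent_lifting[OF e] by blast
  moreover have "q \<in> I" using I_r_closed[OF defect] calculation(5,6) by simp
  ultimately show ?thesis using that by blast
qed

lemma (in ideal) Units_lift:
  assumes IJ: "I \<subseteq> jacobson_radical R" and u: "u \<in> carrier R"
    and "I +> u \<in> Units (R Quot I)"
  shows "u \<in> Units R"
proof -
  interpret h: ring_hom_ring R "R Quot I" "(+>) I" by (rule rcos_ring_hom_ring)
  obtain V where V: "V \<in> carrier (R Quot I)"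
      "V \<otimes>\<^bsub>R Quot I\<^esub> (I +> u) = \<one>\<^bsub>R Quot I\<^esub>" "(I +> u) \<otimes>\<^bsub>R Quot I\<^esub> V = \<one>\<^bsub>R Quot I\<^esub>"
    using assms(3) unfolding Units_def by blast
  then obtain v where v: "v \<in> carrier R" "V = I +> v" using FactRing_carrier_rcos by blast
  have "a \<otimes> b \<in> Units R"
    if "a \<in> carrier R" "b \<in> carrier R" "(I +> a) \<otimes>\<^bsub>R Quot I\<^esub> (I +> b) = \<one>\<^bsub>R Quot I\<^esub>" for a b
  proof -
    have "a \<otimes> b \<ominus> \<one> \<in> I"
      using that h.hom_mult h.hom_one rcos_eq_iff by (metis m_closed one_closed)
    then have "\<one> \<oplus> (a \<otimes> b \<ominus> \<one>) \<in> Units R"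
      using one_plus_jacobson_Units[OF is_ideal IJ] by blast
    then show ?thesis using that minus_eq_iff_eq_add[of "a \<otimes> b" \<one> "a \<otimes> b \<ominus> \<one>"] by simp
  qed
  then have "v \<otimes> u \<in> Units R" "u \<otimes> v \<in> Units R" using u v V by auto
  then show ?thesis
    using Units_if_left_right_inverse[of u "inv (v \<otimes> u) \<otimes> v" "v \<otimes> inv (u \<otimes> v)"] u v
    by (simp add: m_assoc[symmetric]) (simp add: m_assoc)
qed

lemma (in ideal) clean_lift:
  assumes nil: "nil_ideal I R" and IJ: "I \<subseteq> jacobson_radical R" and a: "a \<in> carrier R"
    and "clean_elem (R Quot I) (I +> a)"
  shows "clean_elem R a"
proof -
  interpret h: ring_hom_ring R "R Quot I" "(+>) I" by (rule rcos_ring_hom_ring)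
  obtain E U where E: "ring_idempotent (R Quot I) E" and U: "U \<in> Units (R Quot I)"
    and aEU: "I +> a = E \<oplus>\<^bsub>R Quot I\<^esub> U"
    using assms(4) unfolding clean_elem_def by blast
  obtain e where e: "e \<in> carrier R" "E = I +> e"
    using E FactRing_carrier_rcos unfolding ring_idempotent_def by blast
  obtain u where u: "u \<in> carrier R" "U = I +> u"
    using U FactRing_carrier_rcos by blast
  obtain f q where f: "ring_idempotent R f" and q: "q \<in> I" and e_eq: "e = f \<oplus> q"
    using idempotent_lift[OF nil e(1)] E e(2) by blast
  have uU: "u \<in> Units R" using Units_lift[OF IJ u(1)] U u(2) by blast
  define j where "j = a \<ominus> (e \<oplus> u)"
  have "I +> a = I +> (e \<oplus> u)" using aEU e u h.hom_add by simp
  then have j: "j \<in> I" unfolding j_def using rcos_eq_iff[of a "e \<oplus> u"] a e u by simp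
  have carr: "f \<in> carrier R" "q \<in> carrier R" "j \<in> carrier R"
    using f q j Icarr unfolding ring_idempotent_def by auto
  have "a = (e \<oplus> u) \<oplus> j"
    using minus_eq_iff_eq_add[of a "e \<oplus> u" j] carr a e(1) u(1) unfolding j_def by simp
  also have "\<dots> = f \<oplus> (u \<oplus> (q \<oplus> j))" using carr u(1) unfolding e_eq by (simp add: a_ac)
  finally have "a = f \<oplus> (u \<oplus> (q \<oplus> j))" .
  moreover have "u \<oplus> (q \<oplus> j) \<in> Units R"
    using Units_plus_jacobson[OF is_ideal IJ uU] q j by blast
  ultimately show ?thesis using f unfolding clean_elem_def by blast
qed

lemma (in ideal) nil_ideal_if_CSNC:
  assumes CSNC: "CSNC R" and IJ: "I \<subseteq> jacobson_radical R"
  shows "nil_ideal I R"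
  unfolding nil_ideal_def
proof
  fix x assume x: "x \<in> I"
  have xc: "x \<in> carrier R" using Icarr[OF x] .
  define u where "u = \<one> \<oplus> x"
  have uU: "u \<in> Units R" unfolding u_def using one_plus_jacobson_Units[OF is_ideal IJ x] .
  then have uc: "u \<in> carrier R" "inv u \<in> carrier R" by auto
  have "u \<otimes> (\<one> \<oplus> x) = u \<oplus> u \<otimes> x" using uc(1) xc by (simp add: r_distr)
  then have defect: "u \<otimes> u \<ominus> u = u \<otimes> x"
    unfolding u_def[symmetric] using minus_eq_iff_eq_add uc(1) xc by simp
  have "clean_elem R u"
    unfolding clean_elem_def ring_idempotent_def using uU uc by (intro exI[of _ \<zero>] exI[of _ u]) auto
  then have "ring_nilpotent R (u \<otimes> u \<ominus> u)"
    using CSNC uc strongly_nil_clean_iff unfolding CSNC_def by blast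
  then have nil: "ring_nilpotent R (u \<otimes> x)" unfolding defect .
  have "u \<otimes> x = x \<otimes> u" unfolding u_def using xc by (simp add: r_distr l_distr)
  then have x_eq: "(u \<otimes> x) \<otimes> inv u = x" using uU uc xc by (simp add: m_assoc)
  moreover have "inv u \<otimes> (u \<otimes> x) = x" using uU uc xc by (simp add: m_assoc[symmetric])
  ultimately show "ring_nilpotent R x"
    using nilpotent_mult_commute[OF nil uc(2)] by simp
qed

lemma (in ideal) CSNC_quotient:
  assumes CSNC: "CSNC R" and IJ: "I \<subseteq> jacobson_radical R"
  shows "CSNC (R Quot I)"
  unfolding CSNC_def
proof (intro ballI impI)
  interpret h: ring_hom_ring R "R Quot I" "(+>) I" by (rule rcos_ring_hom_ring)
  fix C assume C: "C \<in> carrier (R Quot I)" and clean: "clean_elem (R Quot I) C"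
  obtain a where a: "a \<in> carrier R" "C = I +> a" using FactRing_carrier_rcos C by blast
  have "clean_elem R a"
    using clean_lift[OF nil_ideal_if_CSNC[OF CSNC IJ] IJ a(1)] clean a(2) by simp
  then have "strongly_nil_clean_elem R a" using CSNC a(1) unfolding CSNC_def by blast
  then show "strongly_nil_clean_elem (R Quot I) C" using h.hom_strongly_nil_clean a(2) by simp
qed

lemma (in ideal) CSNC_if_CSNC_quotient:
  assumes nil: "nil_ideal I R" and CSNC: "CSNC (R Quot I)"
  shows "CSNC R"
  unfolding CSNC_def
proof (intro ballI impI)
  interpret h: ring_hom_ring R "R Quot I" "(+>) I" by (rule rcos_ring_hom_ring)
  fix a assume a: "a \<in> carrier R" and "clean_elem R a"
  then have "clean_elem (R Quot I) (I +> a)" using h.hom_clean by blast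
  then have "strongly_nil_clean_elem (R Quot I) (I +> a)"
    using CSNC h.hom_closed[OF a] unfolding CSNC_def by blast
  then have "ring_nilpotent (R Quot I) ((I +> a) \<otimes>\<^bsub>R Quot I\<^esub> (I +> a) \<ominus>\<^bsub>R Quot I\<^esub> (I +> a))"
    using ring.strongly_nil_clean_iff[OF quotient_is_ring h.hom_closed[OF a]] by blast
  moreover have "(I +> a) \<otimes>\<^bsub>R Quot I\<^esub> (I +> a) \<ominus>\<^bsub>R Quot I\<^esub> (I +> a) = I +> (a \<otimes> a \<ominus> a)"
    by (simp only: h.hom_a_minus[OF m_closed[OF a a] a] h.hom_mult[OF a a])
  ultimately have "ring_nilpotent R (a \<otimes> a \<ominus> a)"
    using nilpotent_lift[OF nil, of "a \<otimes> a \<ominus> a"] a by (simp only: minus_closed m_closed)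
  then show "strongly_nil_clean_elem R a" using strongly_nil_clean_iff a by blast
qed

theorem lemma2p6:
  fixes R :: "('a, 'b) ring_scheme" and I :: "'a set"
  assumes "ring R" and "ideal I R" and "I \<subseteq> jacobson_radical R"
  shows "CSNC R \<longleftrightarrow> nil_ideal I R \<and> CSNC (R Quot I)"
proof
  interpret ideal I R by (rule assms(2))
  show "nil_ideal I R \<and> CSNC (R Quot I)" if "CSNC R"
    using nil_ideal_if_CSNC[OF that assms(3)] CSNC_quotient[OF that assms(3)] by blast
  show "CSNC R" if "nil_ideal I R \<and> CSNC (R Quot I)"
    using CSNC_if_CSNC_quotient that by blast
qed

end
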